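(* Fix $\lambda>0$. For every $C\in\mathbb R$, the set $$M_C=\big\{\big({}^t(x_1,x_2,x_3,0,0),\,{}^t(a_1,a_2,a_3)\big)\in\Lambda^2_-S^4:\ x_1^2+x_2^2+x_3^2=1,\ a_1x_1+a_2x_2-a_3x_3=C\big\}$$ (which equals $(\mathrm{SO}(3)\times\mathrm{SO}(2))\cdot\{({}^t(1,0,0,0,0),{}^t(C,r,0)):r\in\mathbb R\}$) is a coassociative submanifold of $(\Lambda^2_-S^4,\varphi_\lambda)$, homeomorphic to the total space of $TS^2$.
   Context: Let $S^4=\{x={}^t(x_1,\dots,x_5)\in\mathbb R^5:|x|=1\}$ with the round metric and let $\pi:\Lambda^2_-S^4\to S^4$ be the rank-3 bundle of anti-self-dual 2-forms. On $S^4\setminus\{x_5=\pm1\}$ use the oriented orthonormal frame $e_1=\frac{1}{\sqrt{1-x_5^2}}{}^t(-x_2,x_1,-x_4,x_3,0)$, $e_2=\frac{1}{\sqrt{1-x_5^2}}{}^t(-x_3,x_4,x_1,-x_2,0)$, $e_3=\frac{1}{\sqrt{1-x_5^2}}{}^t(-x_4,-x_3,x_2,x_1,0)$, $e_4=\frac{1}{\sqrt{1-x_5^2}}{}^t(-x_1x_5,-x_2x_5,-x_3x_5,-x_4x_5,1-x_5^2)$ with dual coframe $e^1,\dots,e^4$, and set $\omega_1=e^{12}-e^{34}$, $\omega_2=e^{13}-e^{42}$, $\omega_3=e^{14}-e^{23}$ ($e^{ij}=e^i\wedge e^j$), a local frame of $\Lambda^2_-S^4$. The point $\sum_i a_i\omega_i|_x$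 is written $(x,{}^t(a_1,a_2,a_3))$; $r^2=a_1^2+a_2^2+a_3^2$ is the squared fiber norm. Write $\nabla\omega_i=\sum_j\gamma_{ij}\otimes\omega_j$ for the connection induced by the Levi-Civita connection and $b_i=da_i+\sum_j a_j\pi^*\gamma_{ji}$. For $\lambda>0$ the Bryant–Salamon 3-form is $\varphi_\lambda=2s_\lambda\sum_{i=1}^3 b_i\wedge\pi^*\omega_i+s_\lambda^{-3}b_1\wedge b_2\wedge b_3$ with $s_\lambda=(\lambda+r^2)^{1/4}$; it is a torsion-free $G_2$-structure. A 4-dimensional submanifold $L$ is coassociative iff $\varphi_\lambda|_{TL}=0$. $\mathrm{SO}(5)$ acts on $\Lambda^2_-S^4$ by the induced action on 2-forms ($g\cdot\omega=(g^{-1})^*\omega$), preserving $\varphi_\lambda$; $\mathrm{SO}(3)\times\mathrm{SO}(2)\subset\mathrm{SO}(5)$ is block diagonal acting on $(x_1,x_2,x_3)$ and $(x_4,x_5)$. *)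

theory Defs
  imports "HOL-Analysis.Analysis"
begin

fun iter_dd :: "'a::real_normed_vector list \<Rightarrow> ('a \<Rightarrow> 'b::real_normed_vector) \<Rightarrow> 'a \<Rightarrow> 'b" where
  "iter_dd [] f = f"
| "iter_dd (v # vs) f = (\<lambda>x. frechet_derivative (iter_dd vs f) (at x) v)"

definition Cinf_on :: "'a::real_normed_vector set \<Rightarrow> ('a \<Rightarrow> 'b::real_normed_vector) \<Rightarrow> bool" where
  "Cinf_on S f \<longleftrightarrow> (\<forall>vs. iter_dd vs f differentiable_on S)"

definition local_param4 :: "'a::euclidean_space set \<Rightarrow> 'a set \<Rightarrow> (real^4) set \<Rightarrow> (real^4 \<Rightarrow> 'a) \<Rightarrow> bool" where
  "local_param4 M U V f \<longleftrightarrow>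
     open U \<and> open V \<and> Cinf_on V f \<and> f ` V = M \<inter> U \<and> inj_on f V \<and>
     continuous_on (M \<inter> U) (inv_into V f) \<and>
     (\<forall>v\<in>V. inj (frechet_derivative f (at v)))"

definition submanifold4 :: "'a::euclidean_space set \<Rightarrow> bool" where
  "submanifold4 M \<longleftrightarrow> (\<forall>p\<in>M. \<exists>U V f. p \<in> U \<and> local_param4 M U V f)"

definition tangent_space :: "'a::euclidean_space set \<Rightarrow> 'a \<Rightarrow> 'a set" where
  "tangent_space M p = {w. \<exists>U V f v. local_param4 M U V f \<and> v \<in> V \<and> f v = p \<and>
                              w \<in> range (frechet_derivative f (at v))}"

text \<open>Orthonormal frame e_1..e_4 of T S^4 on S^4 minus {x5 = +-1}.\<close>
definition frame :: "nat \<Rightarrow> real^5 \<Rightarrow> real^5" where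
  "frame i x = (1 / sqrt (1 - (x$5)\<^sup>2)) *\<^sub>R
     (if i = 1 then vector [- x$2, x$1, - x$4, x$3, 0]
      else if i = 2 then vector [- x$3, x$4, x$1, - x$2, 0]
      else if i = 3 then vector [- x$4, - x$3, x$2, x$1, 0]
      else vector [- x$1 * x$5, - x$2 * x$5, - x$3 * x$5, - x$4 * x$5, 1 - (x$5)\<^sup>2])"

definition cof :: "nat \<Rightarrow> real^5 \<Rightarrow> real^5 \<Rightarrow> real" where
  "cof i x u = frame i x \<bullet> u"

definition e2 :: "nat \<Rightarrow> nat \<Rightarrow> real^5 \<Rightarrow> real^5 \<Rightarrow> real^5 \<Rightarrow> real" where
  "e2 i j x u v = cof i x u * cof j x v - cof j x u * cof i x v"

definition omega :: "3 \<Rightarrow> real^5 \<Rightarrow> real^5 \<Rightarrow> real^5 \<Rightarrow> real" where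
  "omega k x u v =
     (if k = 1 then e2 1 2 x u v - e2 3 4 x u v
      else if k = 2 then e2 1 3 x u v - e2 4 2 x u v
      else e2 1 4 x u v - e2 2 3 x u v)"

text \<open>Pointwise inner product of 2-forms on T_x S^4 (e^ij, i<j, orthonormal).\<close>
definition form_inner :: "real^5 \<Rightarrow> (real^5 \<Rightarrow> real^5 \<Rightarrow> real) \<Rightarrow> (real^5 \<Rightarrow> real^5 \<Rightarrow> real) \<Rightarrow> real" where
  "form_inner x \<alpha> \<beta> =
     (\<Sum>c\<in>{1..4::nat}. \<Sum>d\<in>{c<..4}. \<alpha> (frame c x) (frame d x) * \<beta> (frame c x) (frame d x))"

text \<open>Connection 1-forms gamma_ij of the Levi-Civita connection on the frame
  omega_i:  nabla omega_i = sum_j gamma_ij (x) omega_j.  For tangent u, v the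
  covariant derivative (nabla_xi omega)(u,v) equals the ambient derivative of
  y |-> omega(y)(u,v) in direction xi, and |omega_j|^2 = 2.\<close>
definition conn :: "3 \<Rightarrow> 3 \<Rightarrow> real^5 \<Rightarrow> real^5 \<Rightarrow> real" where
  "conn i j x \<xi> = 1/2 * form_inner x
      (\<lambda>u v. frechet_derivative (\<lambda>y. omega i y u v) (at x) \<xi>) (omega j x)"

text \<open>Points of the total space are (x, a) with a the coordinates in the frame
  omega_i; tangent vectors are (xi, alpha) with xi tangent to S^4.\<close>
type_synonym bpt = "(real^5) \<times> (real^3)"

definition bform :: "3 \<Rightarrow> bpt \<Rightarrow> bpt \<Rightarrow> real" where
  "bform i p U = snd U $ i + (\<Sum>j\<in>UNIV. snd p $ j * conn j i (fst p) (fst U))"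

definition piom :: "3 \<Rightarrow> bpt \<Rightarrow> bpt \<Rightarrow> bpt \<Rightarrow> real" where
  "piom i p U V = omega i (fst p) (fst U) (fst V)"

definition svar :: "real \<Rightarrow> bpt \<Rightarrow> real" where
  "svar lam p = (lam + (norm (snd p))\<^sup>2) powr (1/4)"

definition phi :: "real \<Rightarrow> bpt \<Rightarrow> bpt \<Rightarrow> bpt \<Rightarrow> bpt \<Rightarrow> real" where
  "phi lam p U V W =
     2 * svar lam p * (\<Sum>i\<in>UNIV.
          bform i p U * piom i p V W - bform i p V * piom i p U W + bform i p W * piom i p U V)
   + (1 / (svar lam p) ^ 3) *
     (bform 1 p U * (bform 2 p V * bform 3 p W - bform 2 p W * bform 3 p V)
    - bform 1 p V * (bform 2 p U * bform 3 p W - bform 2 p W * bform 3 p U)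
    + bform 1 p W * (bform 2 p U * bform 3 p V - bform 2 p V * bform 3 p U))"

text \<open>The part of the total space covered by the frame.\<close>
definition chartdom :: "bpt set" where
  "chartdom = {(x, a). norm x = 1 \<and> x$5 \<noteq> 1 \<and> x$5 \<noteq> -1}"

definition coassociative :: "real \<Rightarrow> bpt set \<Rightarrow> bool" where
  "coassociative lam L \<longleftrightarrow> L \<subseteq> chartdom \<and> submanifold4 L \<and>
     (\<forall>p\<in>L. \<forall>U\<in>tangent_space L p. \<forall>V\<in>tangent_space L p. \<forall>W\<in>tangent_space L p.
        phi lam p U V W = 0)"

definition SOm :: "(real^'n^'n) set" where
  "SOm = {g. orthogonal_matrix g \<and> det g = 1}"

definition blk :: "real^3^3 \<Rightarrow> real^2^2 \<Rightarrow> real^5^5" where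
  "blk A B = vector [vector [A$1$1, A$1$2, A$1$3, 0, 0],
                     vector [A$2$1, A$2$2, A$2$3, 0, 0],
                     vector [A$3$1, A$3$2, A$3$3, 0, 0],
                     vector [0, 0, 0, B$1$1, B$1$2],
                     vector [0, 0, 0, B$2$1, B$2$2]]"

text \<open>Induced action g . omega = (g^-1)^* omega, in the coordinates a.\<close>
definition act :: "real^5^5 \<Rightarrow> bpt \<Rightarrow> bpt" where
  "act g p = (g *v fst p,
     (\<chi> i. 1/2 * form_inner (g *v fst p)
        (\<lambda>u v. \<Sum>j\<in>UNIV. snd p $ j * omega j (fst p) (transpose g *v u) (transpose g *v v))
        (omega i (g *v fst p))))"

definition MC :: "real \<Rightarrow> bpt set" where
  "MC C = {(x, a). x$4 = 0 \<and> x$5 = 0 \<and> (x$1)\<^sup>2 + (x$2)\<^sup>2 + (x$3)\<^sup>2 = 1 \<and>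
                   a$1 * x$1 + a$2 * x$2 - a$3 * x$3 = C}"

definition orbitC :: "real \<Rightarrow> bpt set" where
  "orbitC C = {act (blk A B) (vector [1, 0, 0, 0, 0], vector [C, r, 0]) | A B r.
                 A \<in> SOm \<and> B \<in> SOm}"

definition TS2 :: "((real^3) \<times> (real^3)) set" where
  "TS2 = {(p, v). norm p = 1 \<and> p \<bullet> v = 0}"

end

theory Submission
  imports Defs
begin

(* Write sigma(a) = (a1, a2, -a3).  Over the equatorial sphere S^2 = S^4 /\ {x4 = x5 = 0} the
   frame omega_i restricts to T S^2 as sigma_i(x) times the area form, and the connection forms are
   gamma_ij(h) = +-(x_i h_j - x_j h_i).  Differentiating the equations of M_C then shows that the
   vertical parts b_i of every tangent vector of M_C satisfy sum_i sigma_i(x) b_i = 0.  Hence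
   sum_i b_i /\ omega_i vanishes on T M_C, and so does b_1 /\ b_2 /\ b_3, the three b_i lying in
   the plane orthogonal to sigma(x); both summands of phi_lambda vanish, for every lambda.
   Two charts, built from the stereographic projections of S^2 from the poles +-e_3 and an
   orthogonal frame of T S^2, make M_C a 4-dimensional submanifold, and
   (x, a) |-> (x, sigma(a) - C x) identifies it with T S^2.  Finally, for (A, B) in SO(3) x SO(2)
   with columns c, n, m of A, the point (e_1, a) is sent to
   (c, sigma(a1 c + (B a')_1 n - (B a')_2 m)) with a' = (a2, a3), which gives the orbit
   description of M_C. *)

unbundle cross3_syntax

(* keeps the nat-valued frame index 1 from being rewritten to Suc 0 *)
declare One_nat_def [simp del]

lemma exhaust_5:
  fixes x :: 5
  shows "x = 1 \<or> x = 2 \<or> x = 3 \<or> x = 4 \<or> x = 5"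
proof (induct x)
  case (of_int z)
  then have "z = 0 \<or> z = 1 \<or> z = 2 \<or> z = 3 \<or> z = 4" by fastforce
  then show ?case by auto
qed

lemma forall_5: "(\<forall>i::5. P i) \<longleftrightarrow> P 1 \<and> P 2 \<and> P 3 \<and> P 4 \<and> P 5"
  by (metis exhaust_5)

lemma UNIV_5: "UNIV = {1, 2, 3, 4, 5::5}"
  using exhaust_5 by auto

lemma sum_5: "sum f (UNIV::5 set) = f 1 + f 2 + f 3 + f 4 + f 5"
  unfolding UNIV_5 by (simp add: ac_simps)

lemma vector_4 [simp]:
  "(vector [x1, x2, x3, x4] :: 'a::zero^4) $ 1 = x1"
  "(vector [x1, x2, x3, x4] :: 'a::zero^4) $ 2 = x2"
  "(vector [x1, x2, x3, x4] :: 'a::zero^4) $ 3 = x3"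
  "(vector [x1, x2, x3, x4] :: 'a::zero^4) $ 4 = x4"
  unfolding vector_def by simp_all

lemma vector_5 [simp]:
  "(vector [x1, x2, x3, x4, x5] :: 'a::zero^5) $ 1 = x1"
  "(vector [x1, x2, x3, x4, x5] :: 'a::zero^5) $ 2 = x2"
  "(vector [x1, x2, x3, x4, x5] :: 'a::zero^5) $ 3 = x3"
  "(vector [x1, x2, x3, x4, x5] :: 'a::zero^5) $ 4 = x4"
  "(vector [x1, x2, x3, x4, x5] :: 'a::zero^5) $ 5 = x5"
  unfolding vector_def by simp_all

lemma vec_eq_iff_3: "(x::'a^3) = y \<longleftrightarrow> x$1 = y$1 \<and> x$2 = y$2 \<and> x$3 = y$3"
  by (auto simp: vec_eq_iff forall_3)

lemma vec_eq_iff_4: "(x::'a^4) = y \<longleftrightarrow> x$1 = y$1 \<and> x$2 = y$2 \<and> x$3 = y$3 \<and> x$4 = y$4"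
  by (auto simp: vec_eq_iff forall_4)

lemma vec_eq_iff_5:
  "(x::'a^5) = y \<longleftrightarrow> x$1 = y$1 \<and> x$2 = y$2 \<and> x$3 = y$3 \<and> x$4 = y$4 \<and> x$5 = y$5"
  by (auto simp: vec_eq_iff forall_5)

lemma inner_vec_3: "(x::real^3) \<bullet> y = x$1 * y$1 + x$2 * y$2 + x$3 * y$3"
  by (simp add: inner_vec_def sum_3)

lemma inner_vec_5:
  "(x::real^5) \<bullet> y = x$1 * y$1 + x$2 * y$2 + x$3 * y$3 + x$4 * y$4 + x$5 * y$5"
  by (simp add: inner_vec_def sum_5)

lemma has_derivative_vec_componentwise:
  fixes f :: "'a::real_normed_vector \<Rightarrow> real^'n"
  assumes "\<And>i. ((\<lambda>x. f x $ i) has_derivative (\<lambda>h. f' h $ i)) (at a)"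
  shows "(f has_derivative f') (at a)"
proof -
  have "((\<lambda>x. f x \<bullet> b) has_derivative (\<lambda>h. f' h \<bullet> b)) (at a)" if "b \<in> Basis" for b
  proof -
    obtain i where "b = axis i 1" using \<open>b \<in> Basis\<close> by (auto simp: Basis_vec_def)
    then show ?thesis using assms[of i] by (simp add: inner_axis)
  qed
  then show ?thesis using has_derivative_componentwise_within[of f f' a UNIV] by simp
qed

lemma differentiable_vec_componentwise:
  fixes f :: "'a::real_normed_vector \<Rightarrow> real^'n"
  assumes "\<And>i. (\<lambda>x. f x $ i) differentiable (at a)"
  shows "f differentiable (at a)"
proof -
  have "((\<lambda>x. f x $ i) has_derivative frechet_derivative (\<lambda>x. f x $ i) (at a)) (at a)" for i
    using assms[of i] by (simp add: frechet_derivative_works)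
  then have "(f has_derivative (\<lambda>h. \<chi> i. frechet_derivative (\<lambda>x. f x $ i) (at a) h)) (at a)"
    by (intro has_derivative_vec_componentwise) simp
  then show ?thesis by (rule differentiableI)
qed

lemma has_derivative_vec_nth [derivative_intros]: "((\<lambda>x. x $ i) has_derivative (\<lambda>h. h $ i)) F"
  by (rule bounded_linear_imp_has_derivative[OF bounded_linear_vec_nth])

lemma has_derivative_fst_nth [derivative_intros]:
  "((\<lambda>p. fst p $ i) has_derivative (\<lambda>h. fst h $ i)) F"
  by (intro bounded_linear_imp_has_derivative bounded_linear_compose[OF bounded_linear_vec_nth]
      bounded_linear_fst)

lemma has_derivative_snd_nth [derivative_intros]:
  "((\<lambda>p. snd p $ i) has_derivative (\<lambda>h. snd h $ i)) F"
  by (intro bounded_linear_imp_has_derivative bounded_linear_compose[OF bounded_linear_vec_nth]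
      bounded_linear_snd)

lemma differentiable_fst_nth [derivative_intros]: "(\<lambda>p. fst p $ i) differentiable F"
  by (rule differentiableI[OF has_derivative_fst_nth])

lemma differentiable_snd_nth [derivative_intros]: "(\<lambda>p. snd p $ i) differentiable F"
  by (rule differentiableI[OF has_derivative_snd_nth])

definition embed5 :: "real^3 \<Rightarrow> real^5" where
  "embed5 v = vector [v$1, v$2, v$3, 0, 0]"

definition proj3 :: "real^5 \<Rightarrow> real^3" where
  "proj3 x = vector [x$1, x$2, x$3]"

definition reflect3 :: "real^3 \<Rightarrow> real^3" where
  "reflect3 a = vector [a$1, a$2, - a$3]"

lemma embed5_nth [simp]:
  "embed5 v $ 1 = v$1" "embed5 v $ 2 = v$2" "embed5 v $ 3 = v$3" "embed5 v $ 4 = 0" "embed5 v $ 5 = 0"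
  by (simp_all add: embed5_def)

lemma proj3_nth [simp]: "proj3 x $ 1 = x$1" "proj3 x $ 2 = x$2" "proj3 x $ 3 = x$3"
  by (simp_all add: proj3_def)

lemma reflect3_nth [simp]: "reflect3 a $ 1 = a$1" "reflect3 a $ 2 = a$2" "reflect3 a $ 3 = - a$3"
  by (simp_all add: reflect3_def)

lemma reflect3_reflect3 [simp]: "reflect3 (reflect3 a) = a"
  by (simp add: vec_eq_iff_3)

lemma proj3_embed5 [simp]: "proj3 (embed5 v) = v"
  by (simp add: vec_eq_iff_3)

lemma norm_embed5 [simp]: "norm (embed5 p) = norm p"
  by (simp add: norm_eq_sqrt_inner inner_vec_5 inner_vec_3)

lemma bounded_linear_embed5: "bounded_linear embed5"
  unfolding linear_conv_bounded_linear[symmetric] by (rule linearI) (simp_all add: vec_eq_iff_5)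

lemma bounded_linear_proj3: "bounded_linear proj3"
  unfolding linear_conv_bounded_linear[symmetric] by (rule linearI) (simp_all add: vec_eq_iff_3)

lemma bounded_linear_reflect3: "bounded_linear reflect3"
  unfolding linear_conv_bounded_linear[symmetric] by (rule linearI) (simp_all add: vec_eq_iff_3)

lemma continuous_on_embed5 [continuous_intros]:
  "continuous_on S f \<Longrightarrow> continuous_on S (\<lambda>x. embed5 (f x))"
  by (rule bounded_linear.continuous_on[OF bounded_linear_embed5])

lemma continuous_on_proj3 [continuous_intros]:
  "continuous_on S f \<Longrightarrow> continuous_on S (\<lambda>x. proj3 (f x))"
  by (rule bounded_linear.continuous_on[OF bounded_linear_proj3])

lemma continuous_on_reflect3 [continuous_intros]:
  "continuous_on S f \<Longrightarrow> continuous_on S (\<lambda>x. reflect3 (f x))"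
  by (rule bounded_linear.continuous_on[OF bounded_linear_reflect3])

lemma embed5_in_MC_iff: "(embed5 p, a) \<in> MC C \<longleftrightarrow> norm p = 1 \<and> reflect3 a \<bullet> p = C"
  by (simp add: MC_def norm_eq_1 inner_vec_3 power2_eq_square)

lemma MC_fst_eq: "z \<in> MC C \<Longrightarrow> fst z = embed5 (proj3 (fst z))"
  by (auto simp: MC_def vec_eq_iff_5)

lemma MC_eq: "MC C = {(embed5 p, a) | p a. norm p = 1 \<and> reflect3 a \<bullet> p = C}"
proof (rule set_eqI)
  fix z :: bpt
  obtain x a where z: "z = (x, a)" by (cases z)
  show "z \<in> MC C \<longleftrightarrow> z \<in> {(embed5 p, a) | p a. norm p = 1 \<and> reflect3 a \<bullet> p = C}"
  proof
    assume "z \<in> MC C"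
    then have "x = embed5 (proj3 x)" and "(embed5 (proj3 x), a) \<in> MC C"
      using MC_fst_eq[of z] by (simp_all add: z)
    then show "z \<in> {(embed5 p, a) | p a. norm p = 1 \<and> reflect3 a \<bullet> p = C}"
      unfolding embed5_in_MC_iff z by blast
  qed (auto simp: embed5_in_MC_iff)
qed

section \<open>The frame over the equatorial 2-sphere\<close>

definition on_S2 :: "real^5 \<Rightarrow> bool" where
  "on_S2 x \<longleftrightarrow> x$4 = 0 \<and> x$5 = 0 \<and> (x$1)\<^sup>2 + (x$2)\<^sup>2 + (x$3)\<^sup>2 = 1"

definition tangent_S2 :: "real^5 \<Rightarrow> real^5 \<Rightarrow> bool" where
  "tangent_S2 x h \<longleftrightarrow> h$4 = 0 \<and> h$5 = 0 \<and> x$1 * h$1 + x$2 * h$2 + x$3 * h$3 = 0"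

lemma frame_x5_zero:
  assumes "x$5 = 0"
  shows "frame 1 x = vector [- x$2, x$1, - x$4, x$3, 0]"
    "frame 2 x = vector [- x$3, x$4, x$1, - x$2, 0]"
    "frame 3 x = vector [- x$4, - x$3, x$2, x$1, 0]"
    "frame 4 x = vector [0, 0, 0, 0, 1]"
  using assms by (simp_all add: frame_def)

lemma cof_x5_zero:
  assumes "x$5 = 0"
  shows "cof 1 x u = - x$2 * u$1 + x$1 * u$2 - x$4 * u$3 + x$3 * u$4"
    "cof 2 x u = - x$3 * u$1 + x$4 * u$2 + x$1 * u$3 - x$2 * u$4"
    "cof 3 x u = - x$4 * u$1 - x$3 * u$2 + x$2 * u$3 + x$1 * u$4"
    "cof 4 x u = u$5"
  using assms by (simp_all add: cof_def frame_x5_zero inner_vec_5)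

lemma cof_frame_on_S2:
  assumes "on_S2 x"
  shows
    "cof 1 x (frame 1 x) = 1" "cof 1 x (frame 2 x) = 0" "cof 1 x (frame 3 x) = 0" "cof 1 x (frame 4 x) = 0"
    "cof 2 x (frame 1 x) = 0" "cof 2 x (frame 2 x) = 1" "cof 2 x (frame 3 x) = 0" "cof 2 x (frame 4 x) = 0"
    "cof 3 x (frame 1 x) = 0" "cof 3 x (frame 2 x) = 0" "cof 3 x (frame 3 x) = 1" "cof 3 x (frame 4 x) = 0"
    "cof 4 x (frame 1 x) = 0" "cof 4 x (frame 2 x) = 0" "cof 4 x (frame 3 x) = 0" "cof 4 x (frame 4 x) = 1"
  using assms unfolding on_S2_def
  by (simp_all add: cof_x5_zero frame_x5_zero power2_eq_square algebra_simps)

lemma form_inner_expand: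
  "form_inner x \<alpha> \<beta> =
     \<alpha> (frame 1 x) (frame 2 x) * \<beta> (frame 1 x) (frame 2 x) +
     \<alpha> (frame 1 x) (frame 3 x) * \<beta> (frame 1 x) (frame 3 x) +
     \<alpha> (frame 1 x) (frame 4 x) * \<beta> (frame 1 x) (frame 4 x) +
     \<alpha> (frame 2 x) (frame 3 x) * \<beta> (frame 2 x) (frame 3 x) +
     \<alpha> (frame 2 x) (frame 4 x) * \<beta> (frame 2 x) (frame 4 x) +
     \<alpha> (frame 3 x) (frame 4 x) * \<beta> (frame 3 x) (frame 4 x)"
proof -
  have "{1..4::nat} = {1, 2, 3, 4}" "{1<..4::nat} = {2, 3, 4}" "{2<..4::nat} = {3, 4}"
    "{3<..4::nat} = {4}" "{4<..4::nat} = {}"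
    by auto
  then show ?thesis unfolding form_inner_def by (simp add: algebra_simps)
qed

lemma form_inner_omega_on_S2:
  assumes "on_S2 x"
  shows "form_inner x \<alpha> (omega 1 x) = \<alpha> (frame 1 x) (frame 2 x) - \<alpha> (frame 3 x) (frame 4 x)"
    "form_inner x \<alpha> (omega 2 x) = \<alpha> (frame 1 x) (frame 3 x) + \<alpha> (frame 2 x) (frame 4 x)"
    "form_inner x \<alpha> (omega 3 x) = \<alpha> (frame 1 x) (frame 4 x) - \<alpha> (frame 2 x) (frame 3 x)"
  by (simp_all add: form_inner_expand omega_def e2_def cof_frame_on_S2[OF assms])

definition unscaled_frame :: "nat \<Rightarrow> real^5 \<Rightarrow> real^5" where
  "unscaled_frame i x =
     (if i = 1 then vector [- x$2, x$1, - x$4, x$3, 0]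
      else if i = 2 then vector [- x$3, x$4, x$1, - x$2, 0]
      else if i = 3 then vector [- x$4, - x$3, x$2, x$1, 0]
      else vector [- x$1 * x$5, - x$2 * x$5, - x$3 * x$5, - x$4 * x$5, 1 - (x$5)\<^sup>2])"

lemma cof_eq_scaled: "cof i x u = (1 / sqrt (1 - (x$5)\<^sup>2)) * (unscaled_frame i x \<bullet> u)"
  by (simp add: cof_def frame_def unscaled_frame_def)

definition cof_deriv :: "nat \<Rightarrow> real^5 \<Rightarrow> real^5 \<Rightarrow> real^5 \<Rightarrow> real" where
  "cof_deriv i x u h =
     (if i = 1 \<or> i = 2 \<or> i = 3 then unscaled_frame i h \<bullet> u
      else - (x$1 * u$1 + x$2 * u$2 + x$3 * u$3 + x$4 * u$4) * h$5)"

lemma has_derivative_cof: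
  assumes "x$5 = 0"
  shows "((\<lambda>y. cof i y u) has_derivative cof_deriv i x u) (at x)"
proof -
  have "((\<lambda>y. unscaled_frame i y \<bullet> u) has_derivative cof_deriv i x u) (at x)"
  proof -
    consider "i = 1" | "i = 2" | "i = 3" | "i \<noteq> 1 \<and> i \<noteq> 2 \<and> i \<noteq> 3" by blast
    then show ?thesis
    proof cases
      case 1
      then show ?thesis unfolding unscaled_frame_def cof_deriv_def
        by (simp add: inner_vec_5, auto intro!: derivative_eq_intros simp: algebra_simps)
    next
      case 2
      then show ?thesis unfolding unscaled_frame_def cof_deriv_def
        by (simp add: inner_vec_5, auto intro!: derivative_eq_intros simp: algebra_simps)
    next
      case 3
      then show ?thesis unfolding unscaled_frame_def cof_deriv_def
        by (simp add: inner_vec_5, auto intro!: derivative_eq_intros simp: algebra_simps)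
    next
      case 4
      then show ?thesis using assms unfolding unscaled_frame_def cof_deriv_def
        by (simp add: inner_vec_5, auto intro!: derivative_eq_intros simp: algebra_simps)
    qed
  qed
  moreover have "((\<lambda>y. 1 / sqrt (1 - (y$5)\<^sup>2)) has_derivative (\<lambda>h. 0)) (at x)"
    using assms by (auto intro!: derivative_eq_intros)
  ultimately have "((\<lambda>y. (1 / sqrt (1 - (y$5)\<^sup>2)) * (unscaled_frame i y \<bullet> u)) has_derivative
      (\<lambda>h. 1 / sqrt (1 - (x$5)\<^sup>2) * cof_deriv i x u h + 0 * (unscaled_frame i x \<bullet> u))) (at x)"
    by (rule has_derivative_mult[rotated])
  then show ?thesis using assms by (simp add: cof_eq_scaled)
qed

definition e2_deriv :: "nat \<Rightarrow> nat \<Rightarrow> real^5 \<Rightarrow> real^5 \<Rightarrow> real^5 \<Rightarrow> real^5 \<Rightarrow> real" where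
  "e2_deriv i j x u v h = cof_deriv i x u h * cof j x v + cof i x u * cof_deriv j x v h
     - (cof_deriv j x u h * cof i x v + cof j x u * cof_deriv i x v h)"

lemma has_derivative_e2:
  assumes "x$5 = 0"
  shows "((\<lambda>y. e2 i j y u v) has_derivative e2_deriv i j x u v) (at x)"
  unfolding e2_def e2_deriv_def
  by (rule derivative_eq_intros has_derivative_cof[OF assms] refl)+ (simp add: algebra_simps)

definition omega_deriv :: "3 \<Rightarrow> real^5 \<Rightarrow> real^5 \<Rightarrow> real^5 \<Rightarrow> real^5 \<Rightarrow> real" where
  "omega_deriv k x u v h =
     (if k = 1 then e2_deriv 1 2 x u v h - e2_deriv 3 4 x u v h
      else if k = 2 then e2_deriv 1 3 x u v h - e2_deriv 4 2 x u v h
      else e2_deriv 1 4 x u v h - e2_deriv 2 3 x u v h)"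

lemma frechet_derivative_omega:
  assumes "x$5 = 0"
  shows "frechet_derivative (\<lambda>y. omega k y u v) (at x) = omega_deriv k x u v"
proof -
  have "((\<lambda>y. omega k y u v) has_derivative omega_deriv k x u v) (at x)"
    unfolding omega_def omega_deriv_def
    by (cases "k = 1"; cases "k = 2")
       (simp_all, (rule derivative_eq_intros has_derivative_e2[OF assms] refl)+)
  then show ?thesis by (rule frechet_derivative_at[symmetric])
qed

lemma cof_deriv_frame_on_S2:
  assumes "on_S2 x" "tangent_S2 x h"
  shows "cof_deriv 1 x (frame 1 x) h = 0" "cof_deriv 2 x (frame 2 x) h = 0"
    "cof_deriv 3 x (frame 3 x) h = 0"
    "cof_deriv 1 x (frame 2 x) h = h$2 * x$3 - h$3 * x$2"
    "cof_deriv 1 x (frame 3 x) h = h$3 * x$1 - h$1 * x$3"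
    "cof_deriv 2 x (frame 3 x) h = h$1 * x$2 - h$2 * x$1"
    "cof_deriv 2 x (frame 1 x) h = - (h$2 * x$3 - h$3 * x$2)"
    "cof_deriv 3 x (frame 1 x) h = - (h$3 * x$1 - h$1 * x$3)"
    "cof_deriv 3 x (frame 2 x) h = - (h$1 * x$2 - h$2 * x$1)"
    "cof_deriv 1 x (frame 4 x) h = 0" "cof_deriv 2 x (frame 4 x) h = 0"
    "cof_deriv 3 x (frame 4 x) h = 0" "cof_deriv 4 x (frame c x) h = 0"
  using assms unfolding on_S2_def tangent_S2_def
  by (simp_all add: cof_deriv_def unscaled_frame_def frame_x5_zero inner_vec_5 algebra_simps)

lemma conn_on_S2:
  assumes "on_S2 x" "tangent_S2 x h"
  shows "conn 1 1 x h = 0" "conn 2 2 x h = 0" "conn 3 3 x h = 0"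
    "conn 1 2 x h = x$2 * h$1 - x$1 * h$2" "conn 2 1 x h = - (x$2 * h$1 - x$1 * h$2)"
    "conn 1 3 x h = x$1 * h$3 - x$3 * h$1" "conn 3 1 x h = - (x$1 * h$3 - x$3 * h$1)"
    "conn 2 3 x h = x$2 * h$3 - x$3 * h$2" "conn 3 2 x h = - (x$2 * h$3 - x$3 * h$2)"
proof -
  have "x$5 = 0" using assms(1) by (simp add: on_S2_def)
  note simps = conn_def frechet_derivative_omega[OF this] form_inner_omega_on_S2[OF assms(1)]
    omega_deriv_def e2_deriv_def cof_frame_on_S2[OF assms(1)] cof_deriv_frame_on_S2[OF assms]
  show "conn 1 1 x h = 0" "conn 2 2 x h = 0" "conn 3 3 x h = 0"
    "conn 1 2 x h = x$2 * h$1 - x$1 * h$2" "conn 2 1 x h = - (x$2 * h$1 - x$1 * h$2)"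
    "conn 1 3 x h = x$1 * h$3 - x$3 * h$1" "conn 3 1 x h = - (x$1 * h$3 - x$3 * h$1)"
    "conn 2 3 x h = x$2 * h$3 - x$3 * h$2" "conn 3 2 x h = - (x$2 * h$3 - x$3 * h$2)"
    by (simp_all add: simps algebra_simps)
qed

section \<open>Vanishing of the Bryant--Salamon form on M_C\<close>

definition tangent_MC :: "bpt \<Rightarrow> bpt \<Rightarrow> bool" where
  "tangent_MC p U \<longleftrightarrow> tangent_S2 (fst p) (fst U) \<and>
     snd U$1 * fst p$1 + snd U$2 * fst p$2 - snd U$3 * fst p$3
     + snd p$1 * fst U$1 + snd p$2 * fst U$2 - snd p$3 * fst U$3 = 0"

lemma bform_orthogonal_on_tangent_MC:
  assumes "on_S2 (fst p)" "tangent_MC p U"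
  shows "bform 1 p U * fst p$1 + bform 2 p U * fst p$2 - bform 3 p U * fst p$3 = 0"
proof -
  obtain x a where p: "p = (x, a)" by (cases p)
  obtain h \<alpha> where U: "U = (h, \<alpha>)" by (cases U)
  have x: "on_S2 x" and h: "tangent_S2 x h"
    and lin: "\<alpha>$1 * x$1 + \<alpha>$2 * x$2 - \<alpha>$3 * x$3 + a$1 * h$1 + a$2 * h$2 - a$3 * h$3 = 0"
    using assms by (auto simp: p U tangent_MC_def)
  have sphere: "(x$1)\<^sup>2 + (x$2)\<^sup>2 + (x$3)\<^sup>2 = 1" using x by (simp add: on_S2_def)
  have perp: "x$1 * h$1 + x$2 * h$2 + x$3 * h$3 = 0" using h by (simp add: tangent_S2_def)
  have "bform 1 p U * fst p$1 + bform 2 p U * fst p$2 - bform 3 p U * fst p$3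
     = (\<alpha>$1 * x$1 + \<alpha>$2 * x$2 - \<alpha>$3 * x$3 + a$1 * h$1 + a$2 * h$2 - a$3 * h$3)
       + (a$1 * h$1 + a$2 * h$2 - a$3 * h$3) * ((x$1)\<^sup>2 + (x$2)\<^sup>2 + (x$3)\<^sup>2 - 1)
       - (a$1 * x$1 + a$2 * x$2 - a$3 * x$3) * (x$1 * h$1 + x$2 * h$2 + x$3 * h$3)"
    by (simp add: p U bform_def sum_3 conn_on_S2[OF x h] power2_eq_square algebra_simps)
  then show ?thesis unfolding lin sphere perp by simp
qed

lemma omega_on_tangent_S2:
  assumes "on_S2 x" "tangent_S2 x u" "tangent_S2 x v"
  defines "vol \<equiv> x$1 * (u$2 * v$3 - u$3 * v$2) + x$2 * (u$3 * v$1 - u$1 * v$3)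
    + x$3 * (u$1 * v$2 - u$2 * v$1)"
  shows "omega 1 x u v = vol * x$1" "omega 2 x u v = vol * x$2" "omega 3 x u v = - (vol * x$3)"
  using assms unfolding on_S2_def tangent_S2_def
  by (simp_all add: omega_def e2_def cof_x5_zero algebra_simps)

lemma det3_eq_0_if_orthogonal:
  fixes u1 u2 u3 v1 v2 v3 w1 w2 w3 y1 y2 y3 :: real
  assumes "u1 * y1 + u2 * y2 + u3 * y3 = 0" "v1 * y1 + v2 * y2 + v3 * y3 = 0"
    "w1 * y1 + w2 * y2 + w3 * y3 = 0" and "y1\<^sup>2 + y2\<^sup>2 + y3\<^sup>2 \<noteq> 0"
  shows "u1 * (v2 * w3 - w2 * v3) - v1 * (u2 * w3 - w2 * u3) + w1 * (u2 * v3 - v2 * u3) = 0"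
proof -
  define D where "D = u1 * (v2 * w3 - w2 * v3) - v1 * (u2 * w3 - w2 * u3) + w1 * (u2 * v3 - v2 * u3)"
  have "D * (y1\<^sup>2 + y2\<^sup>2 + y3\<^sup>2)
     = (u1 * y1 + u2 * y2 + u3 * y3)
         * (y1 * (v2 * w3 - w2 * v3) + y2 * (v3 * w1 - v1 * w3) + y3 * (v1 * w2 - v2 * w1))
     + (v1 * y1 + v2 * y2 + v3 * y3)
         * (y1 * (w2 * u3 - u2 * w3) + y2 * (w3 * u1 - w1 * u3) + y3 * (w1 * u2 - w2 * u1))
     + (w1 * y1 + w2 * y2 + w3 * y3)
         * (y1 * (u2 * v3 - v2 * u3) + y2 * (u3 * v1 - u1 * v3) + y3 * (u1 * v2 - u2 * v1))"
    unfolding D_def by (simp add: power2_eq_square algebra_simps)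
  also have "\<dots> = 0" using assms by simp
  finally show ?thesis using assms(4) unfolding D_def by simp
qed

lemma phi_eq_0_on_tangent_MC:
  assumes "on_S2 (fst p)" "tangent_MC p U" "tangent_MC p V" "tangent_MC p W"
  shows "phi lam p U V W = 0"
proof -
  let ?x = "fst p"
  let ?vol = "\<lambda>u v. ?x$1 * (u$2 * v$3 - u$3 * v$2) + ?x$2 * (u$3 * v$1 - u$1 * v$3)
    + ?x$3 * (u$1 * v$2 - u$2 * v$1)"
  let ?b = "\<lambda>U. bform 1 p U * ?x$1 + bform 2 p U * ?x$2 - bform 3 p U * ?x$3"
  have "tangent_S2 ?x (fst U)" "tangent_S2 ?x (fst V)" "tangent_S2 ?x (fst W)"
    using assms by (auto simp: tangent_MC_def)
  note omega = omega_on_tangent_S2[OF assms(1) this(1,2)] omega_on_tangent_S2[OF assms(1) this(1,3)]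
    omega_on_tangent_S2[OF assms(1) this(2,3)]
  have b: "?b U = 0" "?b V = 0" "?b W = 0"
    using bform_orthogonal_on_tangent_MC assms by blast+
  have "(\<Sum>i\<in>UNIV. bform i p U * piom i p V W - bform i p V * piom i p U W + bform i p W * piom i p U V)
      = ?b U * ?vol (fst V) (fst W) - ?b V * ?vol (fst U) (fst W) + ?b W * ?vol (fst U) (fst V)"
    by (simp add: sum_3 piom_def omega algebra_simps)
  then have wedge: "(\<Sum>i\<in>UNIV. bform i p U * piom i p V W - bform i p V * piom i p U W
      + bform i p W * piom i p U V) = 0"
    unfolding b by simp
  have "(?x$1)\<^sup>2 + (?x$2)\<^sup>2 + (- ?x$3)\<^sup>2 \<noteq> 0" using assms(1) by (simp add: on_S2_def)
  then have det: "bform 1 p U * (bform 2 p V * bform 3 p W - bform 2 p W * bform 3 p V)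
    - bform 1 p V * (bform 2 p U * bform 3 p W - bform 2 p W * bform 3 p U)
    + bform 1 p W * (bform 2 p U * bform 3 p V - bform 2 p V * bform 3 p U) = 0"
    by (rule det3_eq_0_if_orthogonal[rotated 3]) (use b in simp_all)
  show ?thesis unfolding phi_def wedge det by simp
qed

lemma local_param4_differentiable:
  assumes "local_param4 M U V f" "v \<in> V"
  shows "f differentiable (at v)"
proof -
  have "open V" and "Cinf_on V f" using assms(1) unfolding local_param4_def by (blast, blast)
  from \<open>Cinf_on V f\<close> have "iter_dd [] f differentiable_on V" unfolding Cinf_on_def by (rule spec)
  then have "f differentiable (at v within V)"
    using assms(2) unfolding differentiable_on_def iter_dd.simps by (rule bspec)
  then show ?thesis by (simp only: at_within_open[OF assms(2) \<open>open V\<close>])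
qed

lemma local_param4_derivative_annihilates:
  assumes lp: "local_param4 M U V f" and v: "v \<in> V"
    and const: "\<And>q. q \<in> M \<Longrightarrow> G q = c" and dG: "(G has_derivative DG) (at (f v))"
  shows "DG (frechet_derivative f (at v) w) = 0"
proof -
  have "open V" and im: "f ` V = M \<inter> U" using lp unfolding local_param4_def by (blast, blast)
  have "(f has_derivative frechet_derivative f (at v)) (at v)"
    using local_param4_differentiable[OF lp v] by (simp add: frechet_derivative_works)
  from has_derivative_compose[OF this dG]
  have chain: "((\<lambda>y. G (f y)) has_derivative (\<lambda>h. DG (frechet_derivative f (at v) h))) (at v)" .
  have "((\<lambda>y. G (f y)) has_derivative (\<lambda>h. 0)) (at v)"
  proof (rule has_derivative_transform_within_open[OF has_derivative_const \<open>open V\<close> v])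
    fix y assume "y \<in> V"
    then have "f y \<in> M" using im by blast
    then show "c = G (f y)" by (simp add: const)
  qed
  from has_derivative_unique[OF chain this] show ?thesis by (rule fun_cong)
qed

lemma MC_on_S2: "p \<in> MC C \<Longrightarrow> on_S2 (fst p)"
  by (auto simp: MC_def on_S2_def)

lemma MC_subset_chartdom: "MC C \<subseteq> chartdom"
  by (auto simp: MC_eq chartdom_def)

lemma tangent_space_MC_imp_tangent_MC:
  assumes p: "p \<in> MC C" and U: "U \<in> tangent_space (MC C) p"
  shows "tangent_MC p U"
proof -
  obtain U' V f v w where lp: "local_param4 (MC C) U' V f" and v: "v \<in> V" and fv: "f v = p"
    and Uw: "U = frechet_derivative f (at v) w"
    using U unfolding tangent_space_def by blast
  note annihilates = local_param4_derivative_annihilates[OF lp v, where w = w, folded Uw, unfolded fv]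
  obtain x a where pxa: "p = (x, a)" by (cases p)
  have "fst U $ 4 = 0" "fst U $ 5 = 0"
    by (rule annihilates[where c = 0, OF _ has_derivative_fst_nth]; auto simp: MC_def)+
  moreover have "x$1 * fst U $ 1 + x$2 * fst U $ 2 + x$3 * fst U $ 3 = 0"
  proof -
    have "((\<lambda>q. (fst q $ 1)\<^sup>2 + (fst q $ 2)\<^sup>2 + (fst q $ 3)\<^sup>2) has_derivative
        (\<lambda>H. 2 * (x$1 * fst H $ 1 + x$2 * fst H $ 2 + x$3 * fst H $ 3))) (at p)"
      unfolding pxa by (auto intro!: derivative_eq_intros simp: algebra_simps)
    from annihilates[where c = 1, OF _ this] show ?thesis by (auto simp: MC_def)
  qed
  moreover have "snd U$1 * x$1 + snd U$2 * x$2 - snd U$3 * x$3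
     + a$1 * fst U$1 + a$2 * fst U$2 - a$3 * fst U$3 = 0"
  proof -
    have "((\<lambda>q. snd q $ 1 * fst q $ 1 + snd q $ 2 * fst q $ 2 - snd q $ 3 * fst q $ 3) has_derivative
        (\<lambda>H. snd H$1 * x$1 + snd H$2 * x$2 - snd H$3 * x$3
          + a$1 * fst H$1 + a$2 * fst H$2 - a$3 * fst H$3)) (at p)"
      unfolding pxa by (auto intro!: derivative_eq_intros simp: algebra_simps)
    from annihilates[where c = C, OF _ this] show ?thesis by (auto simp: MC_def)
  qed
  ultimately show ?thesis by (simp add: tangent_MC_def tangent_S2_def pxa)
qed

section \<open>Rational smooth maps\<close>

inductive rational_smooth :: "(real^'n \<Rightarrow> real) \<Rightarrow> bool" where
  const: "rational_smooth (\<lambda>x. c)"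
| coord: "rational_smooth (\<lambda>x. x $ i)"
| add: "rational_smooth f \<Longrightarrow> rational_smooth g \<Longrightarrow> rational_smooth (\<lambda>x. f x + g x)"
| mult: "rational_smooth f \<Longrightarrow> rational_smooth g \<Longrightarrow> rational_smooth (\<lambda>x. f x * g x)"
| inverse: "rational_smooth f \<Longrightarrow> (\<And>x. f x \<noteq> 0) \<Longrightarrow> rational_smooth (\<lambda>x. inverse (f x))"

lemma rational_smooth_minus: "rational_smooth f \<Longrightarrow> rational_smooth (\<lambda>x. - f x)"
  using rational_smooth.mult[OF rational_smooth.const[of "-1"]] by simp

lemma rational_smooth_diff:
  "rational_smooth f \<Longrightarrow> rational_smooth g \<Longrightarrow> rational_smooth (\<lambda>x. f x - g x)"
  using rational_smooth.add[OF _ rational_smooth_minus] by simp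

lemma rational_smooth_power: "rational_smooth f \<Longrightarrow> rational_smooth (\<lambda>x. f x ^ n)"
  by (induction n) (simp_all add: rational_smooth.const rational_smooth.mult)

lemma rational_smooth_derivative:
  assumes "rational_smooth f"
  shows "\<exists>D. (\<forall>x. (f has_derivative D x) (at x)) \<and> (\<forall>h. rational_smooth (\<lambda>x. D x h))"
  using assms
proof (induction rule: rational_smooth.induct)
  case (const c)
  show ?case by (intro exI[of _ "\<lambda>x h. 0"]) (simp add: rational_smooth.const)
next
  case (coord i)
  show ?case by (intro exI[of _ "\<lambda>x h. h $ i"]) (auto intro: has_derivative_vec_nth rational_smooth.const)
next
  case (add f g)
  then obtain Df Dg where Df: "\<And>x. (f has_derivative Df x) (at x)" "\<And>h. rational_smooth (\<lambda>x. Df x h)"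
    and Dg: "\<And>x. (g has_derivative Dg x) (at x)" "\<And>h. rational_smooth (\<lambda>x. Dg x h)"
    by blast
  show ?case
  proof (intro exI[of _ "\<lambda>x h. Df x h + Dg x h"] conjI allI)
    show "((\<lambda>x. f x + g x) has_derivative (\<lambda>h. Df x h + Dg x h)) (at x)" for x
      by (rule has_derivative_add[OF Df(1) Dg(1)])
    show "rational_smooth (\<lambda>x. Df x h + Dg x h)" for h
      using Df(2) Dg(2) by (rule rational_smooth.add)
  qed
next
  case (mult f g)
  then obtain Df Dg where Df: "\<And>x. (f has_derivative Df x) (at x)" "\<And>h. rational_smooth (\<lambda>x. Df x h)"
    and Dg: "\<And>x. (g has_derivative Dg x) (at x)" "\<And>h. rational_smooth (\<lambda>x. Dg x h)"
    by blast
  show ?case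
  proof (intro exI[of _ "\<lambda>x h. f x * Dg x h + Df x h * g x"] conjI allI)
    show "((\<lambda>x. f x * g x) has_derivative (\<lambda>h. f x * Dg x h + Df x h * g x)) (at x)" for x
      by (rule has_derivative_mult[OF Df(1) Dg(1)])
    show "rational_smooth (\<lambda>x. f x * Dg x h + Df x h * g x)" for h
      using mult.hyps Df(2) Dg(2) by (intro rational_smooth.add rational_smooth.mult)
  qed
next
  case (inverse f)
  then obtain Df where Df: "\<And>x. (f has_derivative Df x) (at x)" "\<And>h. rational_smooth (\<lambda>x. Df x h)"
    by blast
  have inv: "rational_smooth (\<lambda>x. inverse (f x))"
    using inverse.hyps by (rule rational_smooth.inverse)
  show ?case
  proof (intro exI[of _ "\<lambda>x h. - (inverse (f x) * Df x h * inverse (f x))"] conjI allI)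
    show "((\<lambda>x. inverse (f x)) has_derivative (\<lambda>h. - (inverse (f x) * Df x h * inverse (f x)))) (at x)"
      for x by (rule Deriv.has_derivative_inverse[OF inverse.hyps(2) Df(1)])
    show "rational_smooth (\<lambda>x. - (inverse (f x) * Df x h * inverse (f x)))" for h
      using inv Df(2) by (intro rational_smooth_minus rational_smooth.mult)
  qed
qed

definition rational_smooth_map :: "(real^'n \<Rightarrow> (real^'m) \<times> (real^'k)) \<Rightarrow> bool" where
  "rational_smooth_map F \<longleftrightarrow>
     (\<forall>i. rational_smooth (\<lambda>x. fst (F x) $ i)) \<and> (\<forall>i. rational_smooth (\<lambda>x. snd (F x) $ i))"

lemma rational_smooth_map_derivative:
  assumes "rational_smooth_map F"
  shows "\<exists>D. (\<forall>x. (F has_derivative D x) (at x)) \<and> (\<forall>h. rational_smooth_map (\<lambda>x. D x h))"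
proof -
  have "\<forall>i. \<exists>D. (\<forall>x. ((\<lambda>x. fst (F x) $ i) has_derivative D x) (at x)) \<and>
      (\<forall>h. rational_smooth (\<lambda>x. D x h))"
    using assms by (simp add: rational_smooth_map_def rational_smooth_derivative)
  then obtain D1 where D1: "\<And>i x. ((\<lambda>x. fst (F x) $ i) has_derivative D1 i x) (at x)"
    and s1: "\<And>i h. rational_smooth (\<lambda>x. D1 i x h)"
    unfolding choice_iff by blast
  have "\<forall>i. \<exists>D. (\<forall>x. ((\<lambda>x. snd (F x) $ i) has_derivative D x) (at x)) \<and>
      (\<forall>h. rational_smooth (\<lambda>x. D x h))"
    using assms by (simp add: rational_smooth_map_def rational_smooth_derivative)
  then obtain D2 where D2: "\<And>i x. ((\<lambda>x. snd (F x) $ i) has_derivative D2 i x) (at x)"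
    and s2: "\<And>i h. rational_smooth (\<lambda>x. D2 i x h)"
    unfolding choice_iff by blast
  have "((\<lambda>x. (fst (F x), snd (F x))) has_derivative (\<lambda>h. (\<chi> i. D1 i x h, \<chi> i. D2 i x h))) (at x)" for x
    by (intro has_derivative_Pair has_derivative_vec_componentwise) (simp_all add: D1 D2)
  then show ?thesis
    by (intro exI[of _ "\<lambda>x h. (\<chi> i. D1 i x h, \<chi> i. D2 i x h)"])
       (simp add: rational_smooth_map_def s1 s2)
qed

lemma Cinf_on_rational_smooth_map:
  assumes "rational_smooth_map F"
  shows "Cinf_on S F"
proof -
  have "rational_smooth_map (iter_dd vs F) \<and> (\<forall>x. iter_dd vs F differentiable (at x))" for vs
  proof (induction vs)
    case Nil
    show ?case using assms rational_smooth_map_derivative[OF assms] by (auto intro: differentiableI)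
  next
    case (Cons v vs)
    then obtain D where D: "\<And>x. (iter_dd vs F has_derivative D x) (at x)"
      and s: "\<And>h. rational_smooth_map (\<lambda>x. D x h)"
      using rational_smooth_map_derivative by blast
    have "frechet_derivative (iter_dd vs F) (at x) = D x" for x
      by (rule frechet_derivative_at[OF D, symmetric])
    then have "iter_dd (v # vs) F = (\<lambda>x. D x v)" by simp
    then show ?case using s[of v] rational_smooth_map_derivative[OF s[of v]]
      by (auto intro: differentiableI)
  qed
  then show ?thesis
    unfolding Cinf_on_def differentiable_on_def by (simp add: differentiable_at_withinI)
qed

section \<open>Stereographic charts of M_C\<close>

definition stereo_denom :: "real \<Rightarrow> real \<Rightarrow> real" where
  "stereo_denom u1 u2 = 1 + u1\<^sup>2 + u2\<^sup>2"

(* stereo_point e u / stereo_denom u is the inverse of the stereographic projection from the pole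
   e e_3, and stereo_tangent1/2 are stereo_denom^2 / 2 times its partial derivatives; the three
   vectors are orthogonal, each of length stereo_denom. *)
definition stereo_point :: "real \<Rightarrow> real \<Rightarrow> real \<Rightarrow> real^3" where
  "stereo_point e u1 u2 = vector [2 * u1, 2 * u2, e * (u1\<^sup>2 + u2\<^sup>2 - 1)]"

definition stereo_tangent1 :: "real \<Rightarrow> real \<Rightarrow> real \<Rightarrow> real^3" where
  "stereo_tangent1 e u1 u2 = vector [1 - u1\<^sup>2 + u2\<^sup>2, - 2 * u1 * u2, e * 2 * u1]"

definition stereo_tangent2 :: "real \<Rightarrow> real \<Rightarrow> real \<Rightarrow> real^3" where
  "stereo_tangent2 e u1 u2 = vector [- 2 * u1 * u2, 1 + u1\<^sup>2 - u2\<^sup>2, e * 2 * u2]"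

definition inv_stereo :: "real \<Rightarrow> real \<Rightarrow> real \<Rightarrow> real^3" where
  "inv_stereo e u1 u2 = (1 / stereo_denom u1 u2) *\<^sub>R stereo_point e u1 u2"

lemma stereo_denom_pos: "stereo_denom u1 u2 > 0"
  unfolding stereo_denom_def by (simp add: add_pos_nonneg)

lemma stereo_frame_inner:
  assumes "e = 1 \<or> e = -1"
  shows "stereo_point e u1 u2 \<bullet> stereo_point e u1 u2 = (stereo_denom u1 u2)\<^sup>2"
    "stereo_tangent1 e u1 u2 \<bullet> stereo_tangent1 e u1 u2 = (stereo_denom u1 u2)\<^sup>2"
    "stereo_tangent2 e u1 u2 \<bullet> stereo_tangent2 e u1 u2 = (stereo_denom u1 u2)\<^sup>2"
    "stereo_point e u1 u2 \<bullet> stereo_tangent1 e u1 u2 = 0"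
    "stereo_point e u1 u2 \<bullet> stereo_tangent2 e u1 u2 = 0"
    "stereo_tangent1 e u1 u2 \<bullet> stereo_tangent2 e u1 u2 = 0"
  using assms
  by (auto simp: inner_vec_3 stereo_point_def stereo_tangent1_def stereo_tangent2_def stereo_denom_def
      power2_eq_square algebra_simps)

lemma stereo_frame_expansion:
  assumes "e = 1 \<or> e = -1"
  shows "(stereo_denom u1 u2)\<^sup>2 *\<^sub>R b =
    (b \<bullet> stereo_point e u1 u2) *\<^sub>R stereo_point e u1 u2
    + (b \<bullet> stereo_tangent1 e u1 u2) *\<^sub>R stereo_tangent1 e u1 u2
    + (b \<bullet> stereo_tangent2 e u1 u2) *\<^sub>R stereo_tangent2 e u1 u2"
  using assms
  by (auto simp: vec_eq_iff_3 inner_vec_3 stereo_point_def stereo_tangent1_def stereo_tangent2_def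
      stereo_denom_def power2_eq_square algebra_simps)

lemma inv_stereo_inner:
  assumes "e = 1 \<or> e = -1"
  shows "inv_stereo e u1 u2 \<bullet> inv_stereo e u1 u2 = 1"
    "inv_stereo e u1 u2 \<bullet> stereo_tangent1 e u1 u2 = 0"
    "inv_stereo e u1 u2 \<bullet> stereo_tangent2 e u1 u2 = 0"
  using stereo_frame_inner[OF assms, of u1 u2] stereo_denom_pos[of u1 u2]
  by (simp_all add: inv_stereo_def inner_commute power2_eq_square)

(* (w1, w2) are stereographic coordinates of the base point X, and sigma(a) = C X + w3 t1 + w4 t2,
   the coefficient of X being forced by the equation of M_C. *)
definition chart :: "real \<Rightarrow> real \<Rightarrow> real^4 \<Rightarrow> bpt" where
  "chart e C w = (embed5 (inv_stereo e (w$1) (w$2)),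
     reflect3 (C *\<^sub>R inv_stereo e (w$1) (w$2) + w$3 *\<^sub>R stereo_tangent1 e (w$1) (w$2)
       + w$4 *\<^sub>R stereo_tangent2 e (w$1) (w$2)))"

definition chart_inv :: "real \<Rightarrow> bpt \<Rightarrow> real^4" where
  "chart_inv e p =
    (let u1 = fst p $ 1 / (1 - e * fst p $ 3); u2 = fst p $ 2 / (1 - e * fst p $ 3);
         a = reflect3 (snd p); q = (stereo_denom u1 u2)\<^sup>2
     in vector [u1, u2, (a \<bullet> stereo_tangent1 e u1 u2) / q, (a \<bullet> stereo_tangent2 e u1 u2) / q])"

lemma chart_in_MC:
  assumes "e = 1 \<or> e = -1"
  shows "chart e C w \<in> MC C"
  using inv_stereo_inner[OF assms]
  by (simp add: chart_def embed5_in_MC_iff norm_eq_1 inner_add_left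
      inner_commute[of "stereo_tangent1 e _ _"] inner_commute[of "stereo_tangent2 e _ _"])

lemma chart_away_from_pole:
  assumes "e = 1 \<or> e = -1"
  shows "e * fst (chart e C w) $ 3 < 1"
proof -
  have "e * fst (chart e C w) $ 3 = ((w$1)\<^sup>2 + (w$2)\<^sup>2 - 1) / stereo_denom (w$1) (w$2)"
    using assms by (auto simp: chart_def inv_stereo_def stereo_point_def)
  also have "\<dots> < 1" using stereo_denom_pos by (simp add: stereo_denom_def)
  finally show ?thesis .
qed

lemma chart_inv_chart:
  assumes e: "e = 1 \<or> e = -1"
  shows "chart_inv e (chart e C w) = w"
proof -
  let ?q = "stereo_denom (w$1) (w$2)"
  have q: "?q > 0" by (rule stereo_denom_pos)
  have "1 - e * fst (chart e C w) $ 3 = 2 / ?q"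
    using e q by (auto simp: chart_def inv_stereo_def stereo_point_def stereo_denom_def field_simps)
  then have u: "fst (chart e C w) $ 1 / (1 - e * fst (chart e C w) $ 3) = w$1"
    "fst (chart e C w) $ 2 / (1 - e * fst (chart e C w) $ 3) = w$2"
    using q by (simp_all add: chart_def inv_stereo_def stereo_point_def field_simps)
  note inner = stereo_frame_inner[OF e, of "w$1" "w$2"] inv_stereo_inner[OF e, of "w$1" "w$2"]
  have "stereo_tangent2 e (w$1) (w$2) \<bullet> stereo_tangent1 e (w$1) (w$2) = 0"
    using inner by (simp add: inner_commute)
  then show ?thesis
    unfolding chart_inv_def Let_def u using inner q
    by (simp add: vec_eq_iff_4 chart_def inner_add_left)
qed

lemma chart_chart_inv:
  assumes e: "e = 1 \<or> e = -1" and p: "p \<in> MC C" and pole: "e * fst p $ 3 < 1"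
  shows "chart e C (chart_inv e p) = p"
proof -
  obtain c a where pca: "p = (embed5 c, a)" and c: "norm c = 1" and Ca: "reflect3 a \<bullet> c = C"
    using p by (auto simp: MC_eq)
  define d where "d = 1 - e * c$3"
  have d: "d > 0" using pole by (simp add: d_def pca)
  define u1 u2 where "u1 = c$1 / d" and "u2 = c$2 / d"
  have c12: "(c$1)\<^sup>2 + (c$2)\<^sup>2 = d * (2 - d)"
    using c e by (auto simp: d_def norm_eq_1 inner_vec_3 algebra_simps power2_eq_square)
  have "stereo_denom u1 u2 = 1 + ((c$1)\<^sup>2 + (c$2)\<^sup>2) / d\<^sup>2"
    by (simp add: stereo_denom_def u1_def u2_def power_divide add_divide_distrib)
  then have q: "stereo_denom u1 u2 = 2 / d"
    unfolding c12 using d by (simp add: field_simps power2_eq_square)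
  have X: "inv_stereo e u1 u2 = c"
  proof -
    have "u1\<^sup>2 + u2\<^sup>2 = ((c$1)\<^sup>2 + (c$2)\<^sup>2) / d\<^sup>2"
      by (simp add: u1_def u2_def power_divide add_divide_distrib)
    also have "\<dots> = (2 - d) / d"
      unfolding c12 using d by (simp add: power2_eq_square)
    finally have u: "u1\<^sup>2 + u2\<^sup>2 = (2 - d) / d" .
    have "1 / stereo_denom u1 u2 * (e * (u1\<^sup>2 + u2\<^sup>2 - 1)) = e * (1 - d)"
      unfolding q u using d by (simp add: field_simps)
    also have "\<dots> = c$3" using e by (auto simp: d_def)
    finally have "1 / stereo_denom u1 u2 * (e * (u1\<^sup>2 + u2\<^sup>2 - 1)) = c$3" .
    moreover have "1 / stereo_denom u1 u2 * (2 * u1) = c$1" "1 / stereo_denom u1 u2 * (2 * u2) = c$2"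
      unfolding q using d by (simp_all add: u1_def u2_def)
    ultimately show ?thesis
      unfolding vec_eq_iff_3 inv_stereo_def stereo_point_def by simp
  qed
  have "C = reflect3 a \<bullet> ((1 / stereo_denom u1 u2) *\<^sub>R stereo_point e u1 u2)"
    using Ca X by (simp add: inv_stereo_def)
  then have "C = (reflect3 a \<bullet> stereo_point e u1 u2) / stereo_denom u1 u2" by simp
  then have "C *\<^sub>R inv_stereo e u1 u2 + ((reflect3 a \<bullet> stereo_tangent1 e u1 u2) / (stereo_denom u1 u2)\<^sup>2)
        *\<^sub>R stereo_tangent1 e u1 u2 + ((reflect3 a \<bullet> stereo_tangent2 e u1 u2) / (stereo_denom u1 u2)\<^sup>2)
        *\<^sub>R stereo_tangent2 e u1 u2
      = (1 / (stereo_denom u1 u2)\<^sup>2) *\<^sub>R ((stereo_denom u1 u2)\<^sup>2 *\<^sub>R reflect3 a)"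
    unfolding stereo_frame_expansion[OF e]
    by (simp add: inv_stereo_def scaleR_add_right power2_eq_square)
  also have "\<dots> = reflect3 a" using stereo_denom_pos[of u1 u2] by simp
  finally have A: "C *\<^sub>R inv_stereo e u1 u2 + ((reflect3 a \<bullet> stereo_tangent1 e u1 u2) / (stereo_denom u1 u2)\<^sup>2)
        *\<^sub>R stereo_tangent1 e u1 u2 + ((reflect3 a \<bullet> stereo_tangent2 e u1 u2) / (stereo_denom u1 u2)\<^sup>2)
        *\<^sub>R stereo_tangent2 e u1 u2 = reflect3 a" .
  have "chart_inv e p = vector [u1, u2, (reflect3 a \<bullet> stereo_tangent1 e u1 u2) / (stereo_denom u1 u2)\<^sup>2,
      (reflect3 a \<bullet> stereo_tangent2 e u1 u2) / (stereo_denom u1 u2)\<^sup>2]"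
    by (simp add: chart_inv_def Let_def pca u1_def u2_def d_def)
  then show ?thesis using A X by (simp add: chart_def pca)
qed

lemma rational_smooth_map_chart: "rational_smooth_map (chart e C)"
proof -
  have inv_denom: "rational_smooth (\<lambda>w::real^4. inverse (stereo_denom (w$1) (w$2)))"
  proof (rule rational_smooth.inverse)
    show "rational_smooth (\<lambda>w::real^4. stereo_denom (w$1) (w$2))"
      unfolding stereo_denom_def
      by (intro rational_smooth.add rational_smooth_power rational_smooth.const rational_smooth.coord)
    show "stereo_denom (w$1) (w$2) \<noteq> 0" for w :: "real^4"
      using stereo_denom_pos[of "w$1" "w$2"] by simp
  qed
  note rules = inv_denom rational_smooth.add rational_smooth_diff rational_smooth_minus
    rational_smooth.mult rational_smooth_power rational_smooth.coord rational_smooth.const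
  have "rational_smooth (\<lambda>w. fst (chart e C w) $ i)" for i
    using exhaust_5[of i]
    by (elim disjE) (simp_all add: chart_def inv_stereo_def stereo_point_def divide_inverse
        del: inverse_eq_divide; intro rules)+
  moreover have "rational_smooth (\<lambda>w. snd (chart e C w) $ i)" for i
    using exhaust_3[of i]
    by (elim disjE) (simp_all add: chart_def inv_stereo_def stereo_point_def stereo_tangent1_def
        stereo_tangent2_def divide_inverse del: inverse_eq_divide; intro rules)+
  ultimately show ?thesis by (simp add: rational_smooth_map_def)
qed

lemma chart_inv_differentiable:
  assumes "1 - e * fst p $ 3 \<noteq> 0"
  shows "chart_inv e differentiable (at p)"
proof (rule differentiable_vec_componentwise)
  fix i :: 4
  have "stereo_denom a b \<noteq> 0" for a b using stereo_denom_pos[of a b] by simp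
  then have "1 + a\<^sup>2 + b\<^sup>2 \<noteq> 0" for a b :: real by (simp add: stereo_denom_def)
  then show "(\<lambda>p. chart_inv e p $ i) differentiable (at p)"
    using exhaust_4[of i] assms
    by (elim disjE) (simp_all add: chart_inv_def Let_def stereo_denom_def stereo_tangent1_def
        stereo_tangent2_def inner_vec_3; intro derivative_intros; auto)+
qed

lemma inj_derivative_if_left_inverse:
  assumes f: "(f has_derivative f') (at w)" and g: "g differentiable (at (f w))"
    and inverse: "\<And>y. g (f y) = y"
  shows "inj f'"
proof -
  obtain g' where "(g has_derivative g') (at (f w))" using g by (auto simp: differentiable_def)
  from has_derivative_compose[OF f this]
  have "((\<lambda>y. g (f y)) has_derivative (\<lambda>h. g' (f' h))) (at w)" .
  moreover have "((\<lambda>y. g (f y)) has_derivative (\<lambda>h. h)) (at w)"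
    unfolding inverse by (rule has_derivative_ident)
  ultimately have "(\<lambda>h. g' (f' h)) = (\<lambda>h. h)" by (rule has_derivative_unique)
  then show ?thesis by (metis injI)
qed

lemma local_param4_chart:
  assumes e: "e = 1 \<or> e = -1"
  shows "local_param4 (MC C) {p. e * fst p $ 3 < 1} UNIV (chart e C)"
proof -
  let ?U = "{p::bpt. e * fst p $ 3 < 1}"
  have image: "chart e C ` UNIV = MC C \<inter> ?U"
  proof
    show "chart e C ` UNIV \<subseteq> MC C \<inter> ?U"
      using chart_in_MC[OF e] chart_away_from_pole[OF e] by auto
    show "MC C \<inter> ?U \<subseteq> chart e C ` UNIV"
    proof
      fix p assume "p \<in> MC C \<inter> ?U"
      then have "chart e C (chart_inv e p) = p" using chart_chart_inv[OF e] by simp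
      then show "p \<in> chart e C ` UNIV" by (metis rangeI)
    qed
  qed
  have inj: "inj_on (chart e C) UNIV"
    by (rule inj_on_inverseI[of _ "chart_inv e"]) (simp add: chart_inv_chart[OF e])
  have cont: "continuous_on (MC C \<inter> ?U) (chart_inv e)"
  proof (rule differentiable_imp_continuous_on)
    show "chart_inv e differentiable_on MC C \<inter> ?U"
      unfolding differentiable_on_def
      by (auto intro!: differentiable_at_withinI chart_inv_differentiable)
  qed
  have "inv_into UNIV (chart e C) p = chart_inv e p" if "p \<in> MC C \<inter> ?U" for p
    using that chart_chart_inv[OF e] inv_into_f_eq[OF inj, of "chart_inv e p" p] by simp
  then have "continuous_on (MC C \<inter> ?U) (inv_into UNIV (chart e C)) =
      continuous_on (MC C \<inter> ?U) (chart_inv e)"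
    by (rule continuous_on_cong[OF refl])
  with cont have inv_cont: "continuous_on (MC C \<inter> ?U) (inv_into UNIV (chart e C))" by simp
  have deriv_inj: "inj (frechet_derivative (chart e C) (at v))" for v
  proof (rule inj_derivative_if_left_inverse)
    obtain D where "\<forall>x. (chart e C has_derivative D x) (at x)"
      using rational_smooth_map_derivative[OF rational_smooth_map_chart] by blast
    then have "chart e C differentiable (at v)" by (blast intro: differentiableI)
    then show "(chart e C has_derivative frechet_derivative (chart e C) (at v)) (at v)"
      by (rule frechet_derivative_works[THEN iffD1])
    show "chart_inv e differentiable (at (chart e C v))"
      using chart_away_from_pole[OF e, of C v] by (intro chart_inv_differentiable) simp
    show "chart_inv e (chart e C y) = y" for y by (rule chart_inv_chart[OF e])
  qed
  have "open ?U"
    by (rule open_Collect_less) (intro continuous_intros)+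
  then show ?thesis
    unfolding local_param4_def
    by (intro conjI ballI open_UNIV image inj inv_cont deriv_inj
        Cinf_on_rational_smooth_map rational_smooth_map_chart)
qed

lemma submanifold4_MC: "submanifold4 (MC C)"
  unfolding submanifold4_def
proof
  fix p assume "p \<in> MC C"
  show "\<exists>U V f. p \<in> U \<and> local_param4 (MC C) U V f"
  proof (cases "fst p $ 3 < 1")
    case True
    then have "p \<in> {p. 1 * fst p $ 3 < 1}" by simp
    moreover have "local_param4 (MC C) {p. 1 * fst p $ 3 < 1} UNIV (chart 1 C)"
      by (rule local_param4_chart) simp
    ultimately show ?thesis by (intro exI conjI)
  next
    case False
    then have "p \<in> {p. (-1) * fst p $ 3 < 1}" by simp
    moreover have "local_param4 (MC C) {p. (-1) * fst p $ 3 < 1} UNIV (chart (-1) C)"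
      by (rule local_param4_chart) simp
    ultimately show ?thesis by (intro exI conjI)
  qed
qed

lemma phi_eq_0_on_tangent_space_MC:
  assumes "p \<in> MC C" "U \<in> tangent_space (MC C) p" "V \<in> tangent_space (MC C) p"
    "W \<in> tangent_space (MC C) p"
  shows "phi lam p U V W = 0"
  using assms by (intro phi_eq_0_on_tangent_MC MC_on_S2 tangent_space_MC_imp_tangent_MC)

lemma coassociative_MC: "coassociative lam (MC C)"
  unfolding coassociative_def
  by (intro conjI ballI MC_subset_chartdom submanifold4_MC phi_eq_0_on_tangent_space_MC)

lemma MC_homeomorphic_TS2: "MC C homeomorphic TS2"
proof -
  let ?h = "\<lambda>z. (proj3 (fst z), reflect3 (snd z) - C *\<^sub>R proj3 (fst z))"
  let ?k = "\<lambda>y. (embed5 (fst y), reflect3 (snd y + C *\<^sub>R fst y))"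
  have "homeomorphism (MC C) TS2 ?h ?k"
  proof (rule homeomorphismI)
    show "continuous_on (MC C) ?h" "continuous_on TS2 ?k"
      by (intro continuous_intros)+
    show "?h ` MC C \<subseteq> TS2"
      by (auto simp: MC_eq TS2_def inner_diff_right inner_commute norm_eq_1)
    show "?k ` TS2 \<subseteq> MC C"
      by (auto simp: embed5_in_MC_iff TS2_def inner_add_right inner_commute norm_eq_1)
    show "?k (?h z) = z" if "z \<in> MC C" for z
      using that by (auto simp: MC_eq)
    show "?h (?k y) = y" for y
      by simp
  qed
  then show ?thesis unfolding homeomorphic_def by blast
qed

section \<open>The SO(3) x SO(2)-orbit\<close>

lemma SOm_iff_rotation_matrix: "A \<in> SOm \<longleftrightarrow> rotation_matrix A"
  by (simp add: SOm_def rotation_matrix_def)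

lemma rotation_matrix_3_cross_columns:
  fixes A :: "real^3^3"
  assumes "rotation_matrix A"
  shows "column 1 A \<times> column 2 A = column 3 A" "column 3 A \<times> column 1 A = column 2 A"
proof -
  have "column i A \<times> column j A = A *v (axis i 1 \<times> axis j 1)" for i j
    using cross_rotation_matrix[OF assms] by (simp flip: matrix_vector_mult_basis)
  then show "column 1 A \<times> column 2 A = column 3 A" "column 3 A \<times> column 1 A = column 2 A"
    by (simp_all add: cross_basis matrix_vector_mult_basis)
qed

lemma rotation_matrix_2_entries:
  fixes B :: "real^2^2"
  assumes "rotation_matrix B"
  shows "B$2$2 = B$1$1" "B$2$1 = - B$1$2"
proof -
  have "transpose B ** B = mat 1" "det B = 1"
    using assms by (simp_all add: rotation_matrix_def orthogonal_matrix)
  then have "(B$1$1)\<^sup>2 + (B$2$1)\<^sup>2 = 1" "(B$1$2)\<^sup>2 + (B$2$2)\<^sup>2 = 1"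
    "B$1$1 * B$2$2 - B$1$2 * B$2$1 = 1"
    by (auto simp: vec_eq_iff forall_2 matrix_matrix_mult_def transpose_def sum_2 mat_def det_2
        power2_eq_square)
  then have "(B$2$2 - B$1$1)\<^sup>2 + (B$2$1 + B$1$2)\<^sup>2 = 0"
    by (simp add: power2_eq_square algebra_simps)
  then show "B$2$2 = B$1$1" "B$2$1 = - B$1$2"
    by (simp_all add: sum_power2_eq_zero_iff)
qed

lemma vector_matrix_mult_blk:
  "u v* blk A B = vector [A$1$1 * u$1 + A$2$1 * u$2 + A$3$1 * u$3,
     A$1$2 * u$1 + A$2$2 * u$2 + A$3$2 * u$3, A$1$3 * u$1 + A$2$3 * u$2 + A$3$3 * u$3,
     B$1$1 * u$4 + B$2$1 * u$5, B$1$2 * u$4 + B$2$2 * u$5]"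
  by (simp add: vec_eq_iff_5 vector_matrix_mult_def sum_5 blk_def)

lemma blk_base_point: "blk A B *v vector [1, 0, 0, 0, 0] = embed5 (column 1 A)"
  by (simp add: vec_eq_iff_5 matrix_vector_mult_def sum_5 blk_def column_def)

lemma act_blk_base_point_general:
  fixes A :: "real^3^3" and B :: "real^2^2"
  defines "c \<equiv> column 1 A" and "n \<equiv> column 2 A" and "m \<equiv> column 3 A"
  assumes "norm c = 1"
  shows "reflect3 (snd (act (blk A B) (vector [1, 0, 0, 0, 0], a))) =
    (1/2) *\<^sub>R ((a$1 * (det A + det B)) *\<^sub>R c + (B$1$1 * a$2 + B$1$2 * a$3) *\<^sub>R (c \<times> (n \<times> c))
      + (B$1$2 * a$2 - B$1$1 * a$3) *\<^sub>R (c \<times> (m \<times> c)) - (B$2$1 * a$2 + B$2$2 * a$3) *\<^sub>R (c \<times> n)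
      - (B$2$2 * a$2 - B$2$1 * a$3) *\<^sub>R (c \<times> m))"
proof -
  let ?y = "vector [A$1$1, A$2$1, A$3$1, 0, 0] :: real^5"
  have y: "blk A B *v vector [1, 0, 0, 0, 0] = ?y"
    by (simp add: blk_base_point embed5_def column_def)
  have "(A$1$1)\<^sup>2 + (A$2$1)\<^sup>2 + (A$3$1)\<^sup>2 = 1"
    using assms(4) by (simp add: c_def norm_eq_1 inner_vec_3 column_def power2_eq_square)
  then have S2: "on_S2 ?y" by (simp add: on_S2_def)
  have "(vector [1, 0, 0, 0, 0] :: real^5) $ 5 = 0" "?y $ 5 = 0" by simp_all
  note frame = cof_x5_zero[OF this(1)] frame_x5_zero[OF this(2)]
  show ?thesis
    by (simp add: vec_eq_iff_3 act_def y form_inner_omega_on_S2[OF S2] vector_matrix_mult_blk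
        omega_def e2_def frame sum_3 cross_components det_3 det_2 c_def n_def m_def column_def
        field_simps)
qed

lemma act_blk_base_point:
  fixes A :: "real^3^3" and B :: "real^2^2"
  assumes A: "rotation_matrix A" and B: "rotation_matrix B"
  shows "act (blk A B) (vector [1, 0, 0, 0, 0], a) =
    (embed5 (column 1 A), reflect3 (a$1 *\<^sub>R column 1 A + (B$1$1 * a$2 + B$1$2 * a$3) *\<^sub>R column 2 A
      - (B$2$1 * a$2 + B$2$2 * a$3) *\<^sub>R column 3 A))"
proof -
  have "norm (column 1 A) = 1"
    using A by (simp add: rotation_matrix_def orthogonal_matrix_orthonormal_columns)
  note general = act_blk_base_point_general[OF this, of B a]
  note cross = rotation_matrix_3_cross_columns[OF A]
  have cross': "column 2 A \<times> column 1 A = - column 3 A" "column 1 A \<times> column 3 A = - column 2 A"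
    using cross by (metis cross_skew)+
  have "det A = 1" "det B = 1" using A B by (simp_all add: rotation_matrix_def)
  then have "reflect3 (snd (act (blk A B) (vector [1, 0, 0, 0, 0], a))) =
      a$1 *\<^sub>R column 1 A + (B$1$1 * a$2 + B$1$2 * a$3) *\<^sub>R column 2 A
      - (B$2$1 * a$2 + B$2$2 * a$3) *\<^sub>R column 3 A"
    unfolding general
    by (simp add: cross cross' rotation_matrix_2_entries[OF B] vec_eq_iff_3 algebra_simps)
  moreover have "fst (act (blk A B) (vector [1, 0, 0, 0, 0], a)) = embed5 (column 1 A)"
    by (simp add: act_def blk_base_point)
  ultimately show ?thesis by (metis prod.collapse reflect3_reflect3)
qed

lemma orbit_point_in_MC:
  assumes "rotation_matrix A" "rotation_matrix B"
  shows "act (blk A B) (vector [1, 0, 0, 0, 0], vector [C, r, 0]) \<in> MC C"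
proof -
  have "norm (column 1 A) = 1" "column 1 A \<bullet> column 1 A = 1"
    "column 2 A \<bullet> column 1 A = 0" "column 3 A \<bullet> column 1 A = 0"
    using assms(1) unfolding rotation_matrix_def orthogonal_matrix_orthonormal_columns orthogonal_def
    by (auto simp: norm_eq_1)
  then show ?thesis
    by (simp add: act_blk_base_point[OF assms] embed5_in_MC_iff inner_diff_left inner_add_left)
qed

lemma rotation_matrix_with_first_column:
  fixes c v :: "real^3"
  assumes c: "norm c = 1" and cv: "c \<bullet> v = 0"
  obtains A r where "rotation_matrix A" "column 1 A = c" "v = r *\<^sub>R column 2 A"
proof (cases "v = 0")
  case True
  obtain A where "rotation_matrix A" "A *v axis 1 1 = c"
    using rotation_matrix_exists_basis[of c 1] c by auto
  with True that[of A 0] show thesis by (simp add: matrix_vector_mult_basis)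
next
  case False
  define n where "n = (1 / norm v) *\<^sub>R v"
  have n: "norm n = 1" and cn: "c \<bullet> n = 0" and v: "v = norm v *\<^sub>R n"
    using False cv by (simp_all add: n_def)
  define A :: "real^3^3"
    where "A = (\<chi> i j. if j = 1 then c $ i else if j = 2 then n $ i else (c \<times> n) $ i)"
  have cols: "column 1 A = c" "column 2 A = n" "column 3 A = c \<times> n"
    by (simp_all add: A_def column_def vec_eq_iff)
  have cross: "norm (c \<times> n) = 1"
    using c n cn by (simp add: norm_eq_1 dot_cross inner_commute)
  have "orthogonal_matrix A"
    unfolding orthogonal_matrix_orthonormal_columns forall_3 cols
    using c n cross cn
    by (auto simp: orthogonal_def inner_commute dot_cross_self)
  moreover have "det A = 1"
  proof -
    have "transpose A = vector [c, n, c \<times> n]"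
      by (simp add: A_def vec_eq_iff forall_3 transpose_def)
    then have "det A = det (vector [c, n, c \<times> n])" by (metis det_transpose)
    also have "\<dots> = (c \<times> n) \<bullet> (c \<times> n)"
      by (simp add: det_3 cross_components inner_vec_3 algebra_simps)
    also have "\<dots> = 1" using cross by (simp add: norm_eq_1)
    finally show ?thesis .
  qed
  ultimately show thesis
    using that[of A "norm v"] cols v by (simp add: rotation_matrix_def)
qed

lemma MC_subset_orbitC: "MC C \<subseteq> orbitC C"
proof
  fix z assume "z \<in> MC C"
  then obtain c a where z: "z = (embed5 c, a)" and c: "norm c = 1" and Ca: "reflect3 a \<bullet> c = C"
    by (auto simp: MC_eq)
  have "c \<bullet> (reflect3 a - C *\<^sub>R c) = 0"
    using c Ca by (simp add: inner_diff_right inner_commute norm_eq_1)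
  then obtain A r where A: "rotation_matrix A" "column 1 A = c"
    and r: "reflect3 a - C *\<^sub>R c = r *\<^sub>R column 2 A"
    using rotation_matrix_with_first_column c by metis
  have I: "rotation_matrix (mat 1 :: real^2^2)"
    by (simp add: rotation_matrix_def orthogonal_matrix_id)
  have "C *\<^sub>R c + r *\<^sub>R column 2 A = reflect3 a" using r by (simp add: algebra_simps)
  then have "act (blk A (mat 1)) (vector [1, 0, 0, 0, 0], vector [C, r, 0]) = z"
    unfolding act_blk_base_point[OF A(1) I] A(2) by (simp add: mat_def z)
  then show "z \<in> orbitC C"
    using A(1) I unfolding orbitC_def SOm_iff_rotation_matrix by blast
qed

lemma orbitC_subset_MC: "orbitC C \<subseteq> MC C"
  unfolding orbitC_def SOm_iff_rotation_matrix using orbit_point_in_MC by blast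

theorem mainTheorem10:
  fixes lam C :: real
  assumes "lam > 0"
  shows "MC C = orbitC C \<and> coassociative lam (MC C) \<and> MC C homeomorphic TS2"
  using MC_subset_orbitC orbitC_subset_MC coassociative_MC MC_homeomorphic_TS2 by blast

end
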